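(* Fix an arbitrary execution of Algorithm $\mathrm{tree}(G)$ on $G$, and let $r$ and $F$ be as defined in the context. If $uv$ is an edge of $G$ with $d_F(u)\ge 2$, then $r(u)\ge r(v)$.
   Context: $G$ is a finite connected simple undirected graph containing a vertex $a$ with $d_G(a)\ge 2$. For a subtree $T$ of $G$ and a vertex $u$ of $T$: - $V_T(u)$ is the set of vertices $v\in V(G)\setminus V(T)$ with $uv\in E(G)$. - $E_T(u)$ is the set of edges $uv$ of $G$ with $v\in V_T(u)$. - If $|V_T(u)|=1$, then $v_T(u)$ denotes the unique vertex of $V_T(u)$. Three sets of vertices of $T$ are defined: - $W_2(T)=\{u\in V(T): |V_T(u)|\ge 2\}$. - $W_1(T)=\{u\in V(T): |V_T(u)|=1,\ |V_{T\cup E_T(u)}(v_T(u))|\ge 2\}$. - $W_0(T)=\{u\in V(T): |V_T(u)|=1,\ |V_{T\cup E_T(u)}(v_T(u))|\le 1\}$. Algorithm $\mathrm{tree}(G)$ runs as follows. 1. Start with $T=\{a\}$. 2. While $V(T)\ne V(G)$: - If $W_2(T)\ne\emptyset$, pick an arbitrary $u\in W_2(T)$. - Else, if $W_1(T)\neq\emptyset$, pick an arbitrary $u\in W_1(T)$. - Else, let $u$ be the vertex of $W_0(T)$ that joined $V(T)$ most recently. - Set $T:=T\cup E_T(u)$ ("expand $T$ at $u$"). 3. Return $T$. Now fix an execution and let $T$ be the returned spanning tree, rooted at $a$. For $v\ne a$, let $p(v)$ be the parent of $v$ in $T$. For each vertex $u$ with $d_T(u)\ge 2$, let $T_u$ be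 the tree just before the (unique) expansion at $u$. The rank $r:V(G)\to\mathbb{Z}$ is defined by $r(a)=1$ and, for each edge $uv$ of $T$ with $u=p(v)$: - $r(v)=r(u)$ if $u\in W_2(T_u)$; - $r(v)=1+\max_{w\in V(T_u)} r(w)$ otherwise. $F$ is the spanning forest obtained from $T$ by deleting every edge $uv$ with $r(u)\ne r(v)$, and $d_F(u)$ denotes the degree of $u$ in $F$. *)

theory Defs
  imports Main
begin

definition simple_graph :: "'a set \<Rightarrow> ('a \<Rightarrow> 'a \<Rightarrow> bool) \<Rightarrow> bool" where
  "simple_graph V E \<longleftrightarrow> finite V \<and> (\<forall>x y. E x y \<longrightarrow> x \<in> V \<and> y \<in> V)
     \<and> (\<forall>x y. E x y \<longrightarrow> E y x) \<and> (\<forall>x. \<not> E x x)"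

definition connected_graph :: "'a set \<Rightarrow> ('a \<Rightarrow> 'a \<Rightarrow> bool) \<Rightarrow> bool" where
  "connected_graph V E \<longleftrightarrow> (\<forall>x\<in>V. \<forall>y\<in>V. (x, y) \<in> {(p, q). E p q}\<^sup>*)"

definition outN :: "('a \<Rightarrow> 'a \<Rightarrow> bool) \<Rightarrow> 'a set \<Rightarrow> 'a \<Rightarrow> 'a set" where
  "outN E S u = {v. E u v \<and> v \<notin> S}"

text \<open>State of the algorithm: vertex set of T, set of tree edges as (parent, child) pairs,
  rank function (ranks of the vertices of T).\<close>
type_synonym 'a state = "'a set \<times> ('a \<times> 'a) set \<times> ('a \<Rightarrow> int)"

definition expand :: "('a \<Rightarrow> 'a \<Rightarrow> bool) \<Rightarrow> 'a state \<Rightarrow> 'a \<Rightarrow> 'a state" where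
  "expand E st u = (case st of (S, P, r) \<Rightarrow>
     (let N = outN E S u in
       (S \<union> N, P \<union> {(u, v) | v. v \<in> N},
        (\<lambda>w. if w \<in> N then (if card N \<ge> 2 then r u else 1 + Max (r ` S)) else r w))))"

definition run :: "('a \<Rightarrow> 'a \<Rightarrow> bool) \<Rightarrow> 'a \<Rightarrow> 'a list \<Rightarrow> 'a state" where
  "run E a xs = foldl (expand E) ({a}, {}, (\<lambda>_. 1)) xs"

definition tverts :: "('a \<Rightarrow> 'a \<Rightarrow> bool) \<Rightarrow> 'a \<Rightarrow> 'a list \<Rightarrow> 'a set" where
  "tverts E a xs = fst (run E a xs)"

definition tedges :: "('a \<Rightarrow> 'a \<Rightarrow> bool) \<Rightarrow> 'a \<Rightarrow> 'a list \<Rightarrow> ('a \<times> 'a) set" where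
  "tedges E a xs = fst (snd (run E a xs))"

definition rank :: "('a \<Rightarrow> 'a \<Rightarrow> bool) \<Rightarrow> 'a \<Rightarrow> 'a list \<Rightarrow> 'a \<Rightarrow> int" where
  "rank E a xs = snd (snd (run E a xs))"

definition join_time :: "('a \<Rightarrow> 'a \<Rightarrow> bool) \<Rightarrow> 'a \<Rightarrow> 'a list \<Rightarrow> 'a \<Rightarrow> nat" where
  "join_time E a xs w = (LEAST j. w \<in> tverts E a (take j xs))"

definition W2 :: "('a \<Rightarrow> 'a \<Rightarrow> bool) \<Rightarrow> 'a set \<Rightarrow> 'a set" where
  "W2 E S = {u \<in> S. card (outN E S u) \<ge> 2}"

definition W1 :: "('a \<Rightarrow> 'a \<Rightarrow> bool) \<Rightarrow> 'a set \<Rightarrow> 'a set" where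
  "W1 E S = {u \<in> S. card (outN E S u) = 1 \<and>
       card (outN E (S \<union> outN E S u) (the_elem (outN E S u))) \<ge> 2}"

definition W0 :: "('a \<Rightarrow> 'a \<Rightarrow> bool) \<Rightarrow> 'a set \<Rightarrow> 'a set" where
  "W0 E S = {u \<in> S. card (outN E S u) = 1 \<and>
       card (outN E (S \<union> outN E S u) (the_elem (outN E S u))) \<le> 1}"

definition choice_ok :: "('a \<Rightarrow> 'a \<Rightarrow> bool) \<Rightarrow> 'a \<Rightarrow> 'a list \<Rightarrow> 'a \<Rightarrow> bool" where
  "choice_ok E a pre u = (let S = tverts E a pre in
     (if W2 E S \<noteq> {} then u \<in> W2 E S
      else if W1 E S \<noteq> {} then u \<in> W1 E S
      else u \<in> W0 E S \<and> (\<forall>w \<in> W0 E S. join_time E a pre w \<le> join_time E a pre u)))"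

definition tree_exec :: "'a set \<Rightarrow> ('a \<Rightarrow> 'a \<Rightarrow> bool) \<Rightarrow> 'a \<Rightarrow> 'a list \<Rightarrow> bool" where
  "tree_exec V E a xs \<longleftrightarrow>
     (\<forall>i < length xs. tverts E a (take i xs) \<noteq> V \<and> choice_ok E a (take i xs) (xs ! i))
     \<and> tverts E a xs = V"

text \<open>Degree in the forest F: tree edges whose endpoints have equal rank.\<close>
definition degF :: "('a \<Rightarrow> 'a \<Rightarrow> bool) \<Rightarrow> 'a \<Rightarrow> 'a list \<Rightarrow> 'a \<Rightarrow> nat" where
  "degF E a xs u = card {v. ((u, v) \<in> tedges E a xs \<or> (v, u) \<in> tedges E a xs)
                          \<and> rank E a xs u = rank E a xs v}"

end

theory Submission
  imports Defs
begin

text \<open>Ranks never change once assigned. An expansion at a vertex of \<open>W\<^sub>2\<close> happens only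
  while that vertex has the maximal rank, and it puts all remaining neighbours into \<open>T\<close> with
  that same rank; every other expansion gives its new vertices a rank exceeding all previous
  ones. Hence if \<open>xy\<close> is an edge of \<open>F\<close> with \<open>x = p(y)\<close>, then every neighbour of \<open>x\<close> has rank
  at most \<open>r(x)\<close>. A vertex \<open>u\<close> with \<open>d\<^sub>F(u) \<ge> 2\<close> has at most one parent, so it has a child in
  \<open>F\<close>, and the claim follows.\<close>

definition tree_invariant :: "'a set \<Rightarrow> ('a \<Rightarrow> 'a \<Rightarrow> bool) \<Rightarrow> 'a state \<Rightarrow> bool" where
  "tree_invariant V E = (\<lambda>(S, P, r).
     S \<subseteq> V \<and> P \<subseteq> S \<times> S \<and> single_valued (P\<inverse>)
     \<and> (\<forall>w \<in> W2 E S. r w = Max (r ` S))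
     \<and> (\<forall>(x, y) \<in> P. r y = r x \<longrightarrow> (\<forall>z. E x z \<longrightarrow> z \<in> S \<and> r z \<le> r x)))"

lemma finite_vertex_subset: "simple_graph V E \<Longrightarrow> S \<subseteq> V \<Longrightarrow> finite S"
  unfolding simple_graph_def by (metis finite_subset)

lemma outN_subset: "simple_graph V E \<Longrightarrow> outN E S u \<subseteq> V"
  unfolding simple_graph_def outN_def by auto

lemma finite_outN: "simple_graph V E \<Longrightarrow> finite (outN E S u)"
  by (rule finite_vertex_subset[OF _ outN_subset])

lemma outN_disjoint: "outN E S u \<inter> S = {}"
  unfolding outN_def by auto

lemma outN_antimono: "S \<subseteq> S' \<Longrightarrow> outN E S' u \<subseteq> outN E S u"
  unfolding outN_def by auto

lemma W2_antimono:
  assumes "simple_graph V E" and "S \<subseteq> S'" and "w \<in> W2 E S'" and "w \<in> S"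
  shows "w \<in> W2 E S"
proof -
  have "card (outN E S' w) \<le> card (outN E S w)"
    using assms(1,2) by (intro card_mono finite_outN outN_antimono)
  then show ?thesis using assms(3,4) unfolding W2_def by auto
qed

lemma choice_ok_expands_tree_vertex: "choice_ok E a pre u \<Longrightarrow> u \<in> tverts E a pre"
  unfolding choice_ok_def Let_def W2_def W1_def W0_def by (auto split: if_splits)

lemma choice_ok_prefers_W2:
  "choice_ok E a pre u \<Longrightarrow> W2 E (tverts E a pre) \<noteq> {} \<Longrightarrow> u \<in> W2 E (tverts E a pre)"
  unfolding choice_ok_def Let_def by simp

context
  fixes V :: "'a set" and E :: "'a \<Rightarrow> 'a \<Rightarrow> bool" and u :: 'a
    and S S' :: "'a set" and P P' :: "('a \<times> 'a) set" and r r' :: "'a \<Rightarrow> int" and N :: "'a set"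
  defines "N \<equiv> outN E S u"
  assumes graph: "simple_graph V E" and S_subset: "S \<subseteq> V" and u_in_S: "u \<in> S"
    and expansion: "expand E (S, P, r) u = (S', P', r')"
begin

lemma expand_state:
  "S' = S \<union> N" "P' = P \<union> {u} \<times> N"
  "r' = (\<lambda>w. if w \<in> N then (if 2 \<le> card N then r u else 1 + Max (r ` S)) else r w)"
  using expansion unfolding expand_def N_def Let_def by auto

lemma expand_rank_old: "w \<in> S \<Longrightarrow> r' w = r w"
  using outN_disjoint[of E S u] by (auto simp: expand_state N_def)

lemma expand_rank_le_Max: "w \<in> S \<Longrightarrow> r' w \<le> Max (r ` S)"
  using finite_vertex_subset[OF graph S_subset] expand_rank_old by simp

lemma expand_ranks_branching:
  assumes "2 \<le> card N" and "r u = Max (r ` S)"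
  shows "r' ` S' = r ` S"
  using assms u_in_S expand_rank_old by (force simp: expand_state)

lemma expand_Max_rank_new_level:
  assumes "\<not> 2 \<le> card N" and "N \<noteq> {}"
  shows "Max (r' ` S') = 1 + Max (r ` S)"
proof -
  have ranks: "r' ` S' = insert (1 + Max (r ` S)) (r ` S)"
    using assms outN_disjoint[of E S u] by (auto simp: expand_state N_def)
  show ?thesis
    unfolding ranks using finite_vertex_subset[OF graph S_subset] u_in_S by (subst Max_insert) auto
qed

lemma expand_preserves_W2_Max_rank:
  assumes prefer_W2: "W2 E S \<noteq> {} \<longrightarrow> u \<in> W2 E S"
    and W2_Max: "\<forall>w \<in> W2 E S. r w = Max (r ` S)"
  shows "\<forall>w \<in> W2 E S'. r' w = Max (r' ` S')"
proof
  fix w assume w: "w \<in> W2 E S'"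
  have W2_old: "w \<in> S \<Longrightarrow> w \<in> W2 E S"
    using W2_antimono[OF graph _ w] by (simp add: expand_state)
  show "r' w = Max (r' ` S')"
  proof (cases "2 \<le> card N")
    case True
    then have "r u = Max (r ` S)"
      using W2_Max u_in_S unfolding W2_def N_def by auto
    then show ?thesis
      using True W2_old W2_Max expand_ranks_branching expand_rank_old w
      unfolding W2_def by (auto simp: expand_state)
  next
    case False
    then have "W2 E S = {}"
      using prefer_W2 unfolding W2_def N_def by auto
    then have "w \<in> N"
      using W2_old w unfolding W2_def by (auto simp: expand_state)
    then have "r' w = 1 + Max (r ` S)"
      using False by (simp add: expand_state)
    also have "\<dots> = Max (r' ` S')"
      using \<open>w \<in> N\<close> expand_Max_rank_new_level[OF False] by (metis empty_iff)
    finally show ?thesis .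
  qed
qed

lemma expand_preserves_equal_rank_saturation:
  assumes edges: "P \<subseteq> S \<times> S"
    and W2_Max: "u \<in> W2 E S \<Longrightarrow> r u = Max (r ` S)"
    and saturated: "\<forall>(x, y) \<in> P. r y = r x \<longrightarrow> (\<forall>z. E x z \<longrightarrow> z \<in> S \<and> r z \<le> r x)"
  shows "\<forall>(x, y) \<in> P'. r' y = r' x \<longrightarrow> (\<forall>z. E x z \<longrightarrow> z \<in> S' \<and> r' z \<le> r' x)"
proof (intro ballI impI allI, clarify)
  fix x y z assume xy: "(x, y) \<in> P'" and same_rank: "r' y = r' x" and "E x z"
  show "z \<in> S' \<and> r' z \<le> r' x"
  proof (cases "(x, y) \<in> P")
    case True
    then show ?thesis
      using edges saturated same_rank \<open>E x z\<close> expand_rank_old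
      by (fastforce simp: expand_state)
  next
    case False
    then have "x = u" and "y \<in> N" using xy by (auto simp: expand_state)
    have "2 \<le> card N"
    proof (rule ccontr)
      assume "\<not> 2 \<le> card N"
      then have "r' y = 1 + Max (r ` S)" using \<open>y \<in> N\<close> by (simp add: expand_state)
      then show False
        using same_rank \<open>x = u\<close> u_in_S expand_rank_le_Max by fastforce
    qed
    then have "r u = Max (r ` S)"
      using W2_Max u_in_S unfolding W2_def N_def by auto
    moreover have "z \<in> S \<or> z \<in> N"
      using \<open>E x z\<close> \<open>x = u\<close> unfolding N_def outN_def by auto
    ultimately show ?thesis
      using \<open>x = u\<close> \<open>2 \<le> card N\<close> u_in_S expand_rank_old expand_rank_le_Max
      by (auto simp: expand_state)
  qed
qed

lemma expand_preserves_tree_edges: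
  assumes "P \<subseteq> S \<times> S" and "single_valued (P\<inverse>)"
  shows "P' \<subseteq> S' \<times> S'" and "single_valued (P'\<inverse>)"
  using assms u_in_S outN_disjoint[of E S u]
  by (auto simp: expand_state N_def single_valued_def)

lemma expand_preserves_tree_invariant:
  assumes "tree_invariant V E (S, P, r)" and "W2 E S \<noteq> {} \<longrightarrow> u \<in> W2 E S"
  shows "tree_invariant V E (S', P', r')"
proof -
  have "S' \<subseteq> V"
    using S_subset outN_subset[OF graph] by (auto simp: expand_state N_def)
  with assms show ?thesis
    using expand_preserves_tree_edges expand_preserves_W2_Max_rank
      expand_preserves_equal_rank_saturation
    unfolding tree_invariant_def by auto
qed

end

lemma run_snoc: "run E a (pre @ [u]) = expand E (run E a pre) u"
  unfolding run_def by simp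

lemma tree_exec_invariant:
  assumes graph: "simple_graph V E" and "a \<in> V" and exec: "tree_exec V E a xs"
  shows "tree_invariant V E (run E a xs)"
proof -
  have "tree_invariant V E (run E a (take i xs))" if "i \<le> length xs" for i
    using that
  proof (induction i)
    case 0
    then show ?case
      using \<open>a \<in> V\<close> by (auto simp: run_def tree_invariant_def W2_def)
  next
    case (Suc i)
    then have "i < length xs" by simp
    with exec have choice: "choice_ok E a (take i xs) (xs ! i)"
      unfolding tree_exec_def by blast
    obtain S P r where state: "run E a (take i xs) = (S, P, r)"
      by (cases "run E a (take i xs)")
    have inv: "tree_invariant V E (S, P, r)" using Suc state by simp
    then have "S \<subseteq> V" unfolding tree_invariant_def by simp
    have "tverts E a (take i xs) = S" using state by (simp add: tverts_def)
    then have "xs ! i \<in> S" and "W2 E S \<noteq> {} \<longrightarrow> xs ! i \<in> W2 E S"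
      using choice_ok_expands_tree_vertex[OF choice] choice_ok_prefers_W2[OF choice] by auto
    moreover obtain S' P' r' where expanded: "expand E (S, P, r) (xs ! i) = (S', P', r')"
      by (cases "expand E (S, P, r) (xs ! i)")
    ultimately have "tree_invariant V E (S', P', r')"
      using expand_preserves_tree_invariant[OF graph \<open>S \<subseteq> V\<close>] inv by blast
    moreover have "run E a (take (Suc i) xs) = expand E (S, P, r) (xs ! i)"
      using \<open>i < length xs\<close> state by (simp add: take_Suc_conv_app_nth run_snoc)
    ultimately show ?case using expanded by simp
  qed
  from this[of "length xs"] show ?thesis by simp
qed

lemma two_neighbours_imp_child:
  assumes "single_valued (P\<inverse>)" and "2 \<le> card {v. ((u, v) \<in> P \<or> (v, u) \<in> P) \<and> Q v}"
  shows "\<exists>y. (u, y) \<in> P \<and> Q y"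
proof -
  obtain v1 v2 where "v1 \<noteq> v2"
    and "((u, v1) \<in> P \<or> (v1, u) \<in> P) \<and> Q v1" "((u, v2) \<in> P \<or> (v2, u) \<in> P) \<and> Q v2"
    using assms(2) by (auto simp: numeral_2_eq_2 card_le_Suc_iff)
  then show ?thesis using assms(1) unfolding single_valued_def by blast
qed

theorem lemma3:
  fixes V :: "'a set" and E :: "'a \<Rightarrow> 'a \<Rightarrow> bool" and a :: 'a and xs :: "'a list"
  assumes "simple_graph V E" and "connected_graph V E"
    and "a \<in> V" and "card {v. E a v} \<ge> 2"
    and "tree_exec V E a xs"
    and "E u v" and "degF E a xs u \<ge> 2"
  shows "rank E a xs u \<ge> rank E a xs v"
proof -
  obtain S P r where state: "run E a xs = (S, P, r)"
    by (cases "run E a xs")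
  have inv: "tree_invariant V E (S, P, r)"
    using tree_exec_invariant[OF assms(1,3,5)] state by simp
  have "single_valued (P\<inverse>)"
    using inv unfolding tree_invariant_def by simp
  moreover have "2 \<le> card {w. ((u, w) \<in> P \<or> (w, u) \<in> P) \<and> r w = r u}"
    using assms(7) state by (simp add: degF_def tedges_def rank_def eq_commute)
  ultimately obtain y where "(u, y) \<in> P" and "r y = r u"
    using two_neighbours_imp_child[where Q = "\<lambda>w. r w = r u"] by blast
  then have "r v \<le> r u"
    using inv \<open>E u v\<close> unfolding tree_invariant_def by blast
  then show ?thesis
    using state by (simp add: rank_def)
qed

end
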